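(* Let $N\ge 1$ and let $0=p_1<p_2<\cdots<p_N$ be integers (the sensor positions, in units of $d$). Define $$\Phi^u=\{p_{l_1}+p_{l_2}+p_{l_3}\}\cup\{p_{l_1}+p_{l_2}-p_{l_3}\}\cup\{-p_{l_1}-p_{l_2}+p_{l_3}\}\cup\{-p_{l_1}-p_{l_2}-p_{l_3}\},$$ where in each set the indices $l_1,l_2,l_3$ range independently over $\{1,2,\dots,N\}$, and $\Phi^u$ is an ordinary set (repeated values counted once). Then $$6N-5\;\le\;|\Phi^u|\;\le\;k(N):=\frac{4N^3+3N^2-N+3}{3}.$$
   Context: $\Phi^u$ is the set of virtual sensor positions of the third-order exhaustive co-array (TO-ECA) of the linear array with physical sensors at $p_1,\dots,p_N$; it is the union of the underlying sets of the four third-order co-arrays obtained from the cumulants $\mathrm{cum}\{x,x,x\}$, $\mathrm{cum}\{x,x,x^*\}$, $\mathrm{cum}\{x^*,x^*,x\}$, $\mathrm{cum}\{x^*,x^*,x^*\}$ of the received signal vector. *)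

theory Defs
  imports Complex_Main
begin

definition Phi_u :: "(nat \<Rightarrow> int) \<Rightarrow> nat \<Rightarrow> int set" where
  "Phi_u p N =
     {p l1 + p l2 + p l3 | l1 l2 l3. l1 \<in> {1..N} \<and> l2 \<in> {1..N} \<and> l3 \<in> {1..N}}
   \<union> {p l1 + p l2 - p l3 | l1 l2 l3. l1 \<in> {1..N} \<and> l2 \<in> {1..N} \<and> l3 \<in> {1..N}}
   \<union> {- p l1 - p l2 + p l3 | l1 l2 l3. l1 \<in> {1..N} \<and> l2 \<in> {1..N} \<and> l3 \<in> {1..N}}
   \<union> {- p l1 - p l2 - p l3 | l1 l2 l3. l1 \<in> {1..N} \<and> l2 \<in> {1..N} \<and> l3 \<in> {1..N}}"

end

theory Submission
  imports Defs "HOL-Library.Set_Algebras" "HOL-Library.Multiset"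
begin

text \<open>With \<open>B = {p\<^sub>1, ..., p\<^sub>N}\<close> the co-array \<open>\<Phi>\<^sup>u\<close> consists of the sumsets \<open>B+B+B\<close>, \<open>B+B-B\<close>
  and their negatives, and \<open>0 \<in> B\<close>.
  Upper bound: a sum of \<open>k\<close> elements of \<open>B\<close> depends only on the multiset of summands, so a
  \<open>k\<close>-fold sumset has at most \<open>(n+k-1 choose k)\<close> elements. Since \<open>0 \<in> B\<close>, a sum with a zero
  summand collapses to a shorter one, so \<open>\<Phi>\<^sup>u \<subseteq> (B+B-B) \<union> (-P-P+B) \<union> (P+P+P) \<union> (-P-P-P)\<close>
  with \<open>P = B - {0}\<close>, and counting gives \<open>|\<Phi>\<^sup>u| \<le> (4N\<^sup>3 - N)/3 \<le> k(N)\<close>.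
  Lower bound: in an ordered group \<open>X + min Y\<close> and \<open>max X + Y\<close> meet in a single point, so
  \<open>|X + Y| \<ge> |X| + |Y| - 1\<close> and \<open>|B+B+B| \<ge> 3N - 2\<close>. As \<open>B+B+B\<close> is nonnegative and contains
  \<open>0\<close>, together with its negative it gives \<open>2(3N - 2) - 1 = 6N - 5\<close> elements of \<open>\<Phi>\<^sup>u\<close>.\<close>

definition third_order_coarray :: "'a::ab_group_add set \<Rightarrow> 'a set" where
  "third_order_coarray B =
     (B + B + B) \<union> (B + B + uminus ` B) \<union> (uminus ` B + uminus ` B + B)
     \<union> (uminus ` B + uminus ` B + uminus ` B)"

lemma set_plus3_image:
  "f ` I + g ` I + h ` I = {f i + g j + h k | i j k. i \<in> I \<and> j \<in> I \<and> k \<in> I}"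
  by (auto simp: set_plus_def)

lemma Phi_u_eq_third_order_coarray: "Phi_u p N = third_order_coarray (p ` {1..N})"
  unfolding Phi_u_def third_order_coarray_def image_image set_plus3_image
  by (simp only: add_uminus_conv_diff)

lemma finite_third_order_coarray: "finite B \<Longrightarrow> finite (third_order_coarray B)"
  by (simp add: third_order_coarray_def finite_set_plus)

lemma image_uminus_set_plus:
  fixes A B :: "'a::ab_group_add set"
  shows "uminus ` (A + B) = uminus ` A + uminus ` B"
proof (intro set_eqI iffI)
  fix z assume "z \<in> uminus ` (A + B)"
  then obtain a b where "a \<in> A" "b \<in> B" "z = - a + - b"
    by (auto simp: set_plus_def)
  then show "z \<in> uminus ` A + uminus ` B"
    by (simp only:) (intro set_plus_intro imageI)
next
  fix z assume "z \<in> uminus ` A + uminus ` B"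
  then obtain a b where "a \<in> A" "b \<in> B" "z = - (a + b)"
    by (auto simp: set_plus_def)
  then show "z \<in> uminus ` (A + B)"
    by (simp only:) (intro set_plus_intro imageI)
qed

lemma sum_set_subset_sum_mset:
  fixes B :: "'a::comm_monoid_add set"
  shows "(\<Sum>i<k. B) \<subseteq> sum_mset ` multisets_of_size B k"
proof (induction k)
  case 0
  show ?case by simp
next
  case (Suc k)
  show ?case
  proof
    fix x assume "x \<in> (\<Sum>i<Suc k. B)"
    then obtain y b where "y \<in> (\<Sum>i<k. B)" "b \<in> B" "x = y + b"
      by (auto simp: set_plus_def)
    moreover from this(1) Suc.IH obtain M where "M \<in> multisets_of_size B k" "y = sum_mset M"
      by blast
    ultimately show "x \<in> sum_mset ` multisets_of_size B (Suc k)"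
      by (intro image_eqI[of _ _ "add_mset b M"]) (auto simp: multisets_of_size_def add.commute)
  qed
qed

lemma card_sum_set_le:
  fixes B :: "'a::comm_monoid_add set"
  assumes "finite B"
  shows "card (\<Sum>i<k. B) \<le> (card B + k - 1) choose k"
proof -
  have "card (\<Sum>i<k. B) \<le> card (sum_mset ` multisets_of_size B k)"
    using assms by (intro card_mono sum_set_subset_sum_mset) auto
  also have "\<dots> \<le> card (multisets_of_size B k)"
    using assms by (intro card_image_le) auto
  finally show ?thesis
    using assms by (simp add: card_multisets_of_size)
qed

lemma choose_two_mult: "2 * ((n + 1) choose 2) = n * (n + 1)"
  by (simp add: choose_two)

lemma choose_three_mult: "6 * ((n + 2) choose 3) = n * (n + 1) * (n + 2)"
proof -
  have "3 * ((n + 2) choose 3) = (n + 2) * ((n + 1) choose 2)"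
    using Suc_times_binomial[of 2 "n + 1"] by (simp add: eval_nat_numeral del: binomial_Suc_Suc)
  then have "6 * ((n + 2) choose 3) = (n + 2) * (2 * ((n + 1) choose 2))"
    by simp
  also have "\<dots> = n * (n + 1) * (n + 2)"
    by (simp only: choose_two_mult mult.commute)
  finally show ?thesis .
qed

lemma card_set_plus_self_le:
  fixes B :: "'a::comm_monoid_add set"
  assumes "finite B"
  shows "2 * card (B + B) \<le> card B * (card B + 1)"
proof -
  have "B + B = (\<Sum>i<2::nat. B)"
    by (simp add: numeral_2_eq_2)
  then have "card (B + B) \<le> (card B + 1) choose 2"
    using card_sum_set_le[OF assms, of 2] by simp
  then show ?thesis
    using choose_two_mult[of "card B"] by linarith
qed

lemma card_set_plus_self3_le:
  fixes B :: "'a::comm_monoid_add set"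
  assumes "finite B"
  shows "6 * card (B + B + B) \<le> card B * (card B + 1) * (card B + 2)"
proof -
  have "B + B + B = (\<Sum>i<3::nat. B)"
    by (simp add: numeral_3_eq_3)
  then have "card (B + B + B) \<le> (card B + 2) choose 3"
    using card_sum_set_le[OF assms, of 3] by simp
  then show ?thesis
    using choose_three_mult[of "card B"] by linarith
qed

lemma card_set_plus_le:
  assumes "finite A" "finite B"
  shows "card (A + B) \<le> card A * card B"
  unfolding set_plus_image
  using card_image_le[of "A \<times> B"] assms by (simp add: card_cartesian_product)

lemma set_plus_superset_if_zero_mem:
  fixes A :: "'a::comm_monoid_add set"
  assumes "0 \<in> C"
  shows "A \<subseteq> A + C"
  using set_zero_plus2[OF assms, of A] by (simp add: add.commute)

lemma insert_zero_set_plus_self: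
  fixes P :: "'a::comm_monoid_add set"
  shows "insert 0 P + insert 0 P = (P + P) \<union> insert 0 P"
  by (auto simp: insert_set_plus set_plus_insert)

lemma insert_zero_set_plus_self3:
  fixes P :: "'a::comm_monoid_add set"
  shows "insert 0 P + insert 0 P + insert 0 P = (P + P + P) \<union> (insert 0 P + insert 0 P)"
proof -
  have "insert 0 P + insert 0 P + insert 0 P = ((P + P) \<union> insert 0 P) + insert 0 P"
    by (simp only: insert_zero_set_plus_self)
  also have "\<dots> = (P + P + insert 0 P) \<union> (insert 0 P + insert 0 P)"
    by (rule Un_set_plus)
  also have "P + P + insert 0 P = (P + P + P) \<union> (P + P)"
    by (simp add: set_plus_insert)
  finally show ?thesis
    by (auto simp: insert_zero_set_plus_self)
qed

lemma third_order_coarray_insert_zero_subset: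
  fixes P :: "'a::ab_group_add set"
  defines "B \<equiv> insert 0 P"
  shows "third_order_coarray B \<subseteq>
    (B + B + uminus ` B) \<union> (uminus ` P + uminus ` P + B) \<union> (P + P + P)
    \<union> (uminus ` P + uminus ` P + uminus ` P)"
proof -
  let ?D = "B + B + uminus ` B" and ?nP = "uminus ` P"
  have nB: "uminus ` B = insert 0 ?nP"
    by (simp add: B_def)
  have "B + B \<subseteq> ?D"
    by (rule set_plus_superset_if_zero_mem) (simp add: nB)
  then have S: "B + B + B \<subseteq> (P + P + P) \<union> ?D"
    unfolding B_def insert_zero_set_plus_self3 by blast
  have "uminus ` B + B \<subseteq> uminus ` B + B + B"
    by (rule set_plus_superset_if_zero_mem) (simp add: B_def)
  then have "uminus ` B + B \<subseteq> ?D"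
    by (simp add: add_ac)
  then have nD: "uminus ` B + uminus ` B + B \<subseteq> (?nP + ?nP + B) \<union> ?D"
    unfolding nB insert_zero_set_plus_self Un_set_plus by blast
  have "uminus ` B + uminus ` B \<subseteq> uminus ` B + uminus ` B + B"
    by (rule set_plus_superset_if_zero_mem) (simp add: B_def)
  then have nS: "uminus ` B + uminus ` B + uminus ` B \<subseteq> (?nP + ?nP + ?nP) \<union> (?nP + ?nP + B) \<union> ?D"
    using nD unfolding nB insert_zero_set_plus_self3 by blast
  show ?thesis
    using S nD nS unfolding third_order_coarray_def by blast
qed

lemma card_third_order_coarray_le:
  fixes B :: "'a::ab_group_add set"
  assumes "finite B" "0 \<in> B"
  shows "3 * card (third_order_coarray B) + card B \<le> 4 * card B ^ 3"
proof -
  define P where "P = B - {0}"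
  define n m where "n = card B" and "m = card P"
  have B: "B = insert 0 P"
    using assms(2) by (auto simp: P_def)
  have fin: "finite P" "finite (uminus ` P)"
    using assms(1) by (simp_all add: P_def)
  have n: "n = Suc m" "card (uminus ` B) = n"
    using card_Suc_Diff1[OF assms] by (simp_all add: n_def m_def P_def card_image)
  have m: "card (uminus ` P) = m"
    by (simp add: m_def card_image)
  let ?D = "B + B + uminus ` B" and ?E = "uminus ` P + uminus ` P + B"
  have "card (third_order_coarray B) \<le> card (?D \<union> ?E \<union> (P + P + P) \<union> (uminus ` P + uminus ` P + uminus ` P))"
    using third_order_coarray_insert_zero_subset[of P] assms(1) fin
    by (intro card_mono) (simp_all add: B [symmetric] finite_set_plus)
  also have "\<dots> \<le> card ?D + card ?E + card (P + P + P) + card (uminus ` P + uminus ` P + uminus ` P)"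
    by (meson card_Un_le add_mono le_trans order_refl)
  finally have card_le_sum: "card (third_order_coarray B) \<le> \<dots>" .
  have "2 * card ?D \<le> 2 * card (B + B) * n"
    using card_set_plus_le[of "B + B" "uminus ` B"] assms(1) n by (simp add: finite_set_plus)
  also have "\<dots> \<le> n * (n + 1) * n"
    using card_set_plus_self_le[OF assms(1)] by (simp add: n_def)
  finally have D: "2 * card ?D \<le> n * (n + 1) * n" .
  have "2 * card ?E \<le> 2 * card (uminus ` P + uminus ` P) * n"
    using card_set_plus_le[of "uminus ` P + uminus ` P" B] assms(1) fin by (simp add: finite_set_plus n_def)
  also have "\<dots> \<le> m * (m + 1) * n"
    using card_set_plus_self_le[OF fin(2)] m by simp
  finally have E: "2 * card ?E \<le> m * (m + 1) * n" .
  have P3: "6 * card (P + P + P) \<le> m * (m + 1) * (m + 2)"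
    "6 * card (uminus ` P + uminus ` P + uminus ` P) \<le> m * (m + 1) * (m + 2)"
    using card_set_plus_self3_le[OF fin(1)] card_set_plus_self3_le[OF fin(2)] m by (simp_all add: m_def)
  have "3 * (n * (n + 1) * n) + 3 * (m * (m + 1) * n) + 2 * (m * (m + 1) * (m + 2)) + 2 * n = 8 * n ^ 3"
    by (simp add: n(1) algebra_simps power3_eq_cube)
  then show ?thesis
    using card_le_sum D E P3 by (simp add: n_def)
qed

lemma card_set_plus_ge:
  fixes A B :: "'a::linordered_ab_group_add set"
  assumes "finite A" "finite B" "A \<noteq> {}" "B \<noteq> {}"
  shows "card A + card B \<le> card (A + B) + 1"
proof -
  define a b where "a = Max A" and "b = Min B"
  define X Y where "X = (\<lambda>x. x + b) ` A" and "Y = (\<lambda>y. a + y) ` B"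
  have "a \<in> A" "b \<in> B"
    using assms by (simp_all add: a_def b_def)
  have "X \<inter> Y \<subseteq> {a + b}"
  proof
    fix z assume "z \<in> X \<inter> Y"
    then obtain x y where "x \<in> A" "y \<in> B" "z = x + b" "z = a + y"
      by (auto simp: X_def Y_def)
    moreover have "x \<le> a" "b \<le> y"
      using \<open>x \<in> A\<close> \<open>y \<in> B\<close> assms by (simp_all add: a_def b_def)
    ultimately have "x = a"
      using add_less_le_mono[of x a b y] by fastforce
    with \<open>z = x + b\<close> show "z \<in> {a + b}"
      by simp
  qed
  have "card X = card A" "card Y = card B"
    by (simp_all add: X_def Y_def card_image)
  then have "card A + card B = card (X \<union> Y) + card (X \<inter> Y)"
    using card_Un_Int[of X Y] assms(1,2) by (simp add: X_def Y_def)
  also have "card (X \<union> Y) \<le> card (A + B)"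
    using \<open>a \<in> A\<close> \<open>b \<in> B\<close> assms(1,2)
    by (intro card_mono finite_set_plus) (auto simp: X_def Y_def)
  also have "card (X \<inter> Y) \<le> 1"
    using card_mono[OF _ \<open>X \<inter> Y \<subseteq> {a + b}\<close>] by simp
  finally show ?thesis
    by simp
qed

lemma card_Un_uminus_image:
  fixes L :: "'a::linordered_ab_group_add set"
  assumes "finite L" "0 \<in> L" "\<forall>x\<in>L. 0 \<le> x"
  shows "card (L \<union> uminus ` L) + 1 = 2 * card L"
proof -
  have "L \<inter> uminus ` L = {0}"
  proof
    show "L \<inter> uminus ` L \<subseteq> {0}"
    proof
      fix x assume "x \<in> L \<inter> uminus ` L"
      then obtain y where "x \<in> L" "y \<in> L" "x = - y"
        by auto
      then have "y = 0"
        using assms(3) by (intro antisym) auto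
      with \<open>x = - y\<close> show "x \<in> {0}"
        by simp
    qed
    show "{0} \<subseteq> L \<inter> uminus ` L"
      using assms(2) by (auto intro: image_eqI[of 0 uminus 0])
  qed
  moreover have "card (uminus ` L) = card L"
    by (simp add: card_image)
  ultimately show ?thesis
    using card_Un_Int[of L "uminus ` L"] assms(1) by simp
qed

lemma card_third_order_coarray_ge:
  fixes B :: "'a::linordered_ab_group_add set"
  assumes "finite B" "0 \<in> B" "\<forall>b\<in>B. 0 \<le> b"
  shows "6 * card B \<le> card (third_order_coarray B) + 5"
proof -
  let ?S = "B + B + B"
  have "B \<noteq> {}" "B + B \<noteq> {}" "finite (B + B)" "finite ?S"
    using assms(1,2) by (auto simp: finite_set_plus)
  then have "3 * card B \<le> card ?S + 2"
    using card_set_plus_ge[of B B] card_set_plus_ge[of "B + B" B] assms(1) by simp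
  moreover have "card (?S \<union> uminus ` ?S) + 1 = 2 * card ?S"
  proof (rule card_Un_uminus_image)
    show "finite ?S" by fact
    show "0 \<in> ?S"
      using assms(2) set_plus_intro[of 0 "B + B" 0 B] set_plus_intro[of 0 B 0 B] by simp
    show "\<forall>x\<in>?S. 0 \<le> x"
      using assms(3) by (auto simp: set_plus_def)
  qed
  moreover have "card (?S \<union> uminus ` ?S) \<le> card (third_order_coarray B)"
    using assms(1)
    by (intro card_mono finite_third_order_coarray)
       (auto simp: third_order_coarray_def image_uminus_set_plus)
  ultimately show ?thesis
    by linarith
qed

theorem theorem1:
  fixes p :: "nat \<Rightarrow> int" and N :: nat
  assumes "N \<ge> 1"
    and "p 1 = 0"
    and "strict_mono_on {1..N} p"
  shows "6 * real N - 5 \<le> real (card (Phi_u p N))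
         \<and> real (card (Phi_u p N)) \<le> (4 * real N ^ 3 + 3 * real N ^ 2 - real N + 3) / 3"
proof -
  let ?B = "p ` {1..N}"
  have card_B: "card ?B = N"
    using strict_mono_on_imp_inj_on[OF assms(3)] by (simp add: card_image)
  have zero: "0 \<in> ?B"
    using assms(1,2) by (auto intro: image_eqI[of 0 p 1])
  have nonneg: "\<forall>b\<in>?B. 0 \<le> b"
    using strict_mono_on_leD[OF assms(3), of 1] assms(2) by auto
  have "6 * N \<le> card (Phi_u p N) + 5"
    using card_third_order_coarray_ge[OF _ zero nonneg] card_B
    by (simp add: Phi_u_eq_third_order_coarray)
  then have lower: "6 * real N \<le> real (card (Phi_u p N)) + 5"
    by linarith
  have "3 * card (Phi_u p N) + N \<le> 4 * N ^ 3"
    using card_third_order_coarray_le[OF _ zero] card_B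
    by (simp add: Phi_u_eq_third_order_coarray)
  then have "real (3 * card (Phi_u p N) + N) \<le> real (4 * N ^ 3)"
    by (rule of_nat_mono)
  then have "3 * real (card (Phi_u p N)) + real N \<le> 4 * real N ^ 3"
    by simp
  then have upper: "real (card (Phi_u p N)) * 3 \<le> 4 * real N ^ 3 + 3 * real N ^ 2 - real N + 3"
    using zero_le_power2[of "real N"] by linarith
  show ?thesis
    using lower upper by simp
qed

end
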